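(* Let $d,a\in\mathbb{N}$ with $d,a\ge 1$, and let $G=(V,E)$ be a $d$-degenerate graph of maximum degree $\Delta=2da$ whose edges have distinct arrival times. Fix an ordering $v_1,\dots,v_n$ of $V$ in which each $v_i$ has at most $d$ neighbors among $v_1,\dots,v_{i-1}$. Run the following process: start with $E_1=\dots=E_a=\emptyset$; for $i=1,\dots,n$, process the front-edges at $v_i$ in increasing order of arrival time; when processing such an edge $e$, let $J(e)=\{j\in\{1,\dots,a\}: |E_j\cap \mathrm{Prev}(e,v_i)|\le 2d-1\}$, let $j'$ be the least index with $|E_{j'}\cap E(v_i)|\le 2d-1$, and add $e$ to $E_{j'}$. Then at every step: (i) such an index $j'$ exists, and adding $e$ to $E_{j'}$ keeps the maximum degree of $(V,E_{j'})$ at most $2d$ (so at the end $E_1,\dots,E_a$ partition $E$ with each $(V,E_j)$ of maximum degree at most $2d$); and (ii) $j'\in J(e)$ and $j'$ is among the $d+1$ smallest elements of $J(e)$, i.e. $|\{j\in J(e): j<j'\}|\le d$.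
   Context: All graphs are simple. For the ordering $v_1,\dots,v_n$, an edge $(v_i,v_k)$ with $i<k$ is a front-edge at $v_i$ and a back-edge at $v_k$. $E(v)$ denotes the set of edges incident to $v$, and $\mathrm{Prev}(e,v)$ denotes the set of edges in $E(v)$ that arrive (strictly) before $e$. A graph is $d$-degenerate if its vertices can be ordered so that each vertex has at most $d$ neighbors earlier in the order. *)

theory Defs
  imports Main
begin

definition simple_graph :: "'a set \<Rightarrow> 'a set set \<Rightarrow> bool" where
  "simple_graph V E \<longleftrightarrow> finite V \<and> E \<subseteq> {{u, w} | u w. u \<in> V \<and> w \<in> V \<and> u \<noteq> w}"

definition inc :: "'a set set \<Rightarrow> 'a \<Rightarrow> 'a set set" where
  "inc E v = {f \<in> E. v \<in> f}"

definition degree :: "'a set set \<Rightarrow> 'a \<Rightarrow> nat" where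
  "degree E v = card (inc E v)"

definition max_degree :: "'a set \<Rightarrow> 'a set set \<Rightarrow> nat" where
  "max_degree V E = Max (degree E ` V)"

definition Prev :: "'a set set \<Rightarrow> ('a set \<Rightarrow> 'b::linorder) \<Rightarrow> 'a set \<Rightarrow> 'a \<Rightarrow> 'a set set" where
  "Prev E t e v = {f \<in> inc E v. t f < t e}"

definition degenerate_order :: "'a list \<Rightarrow> 'a set set \<Rightarrow> nat \<Rightarrow> bool" where
  "degenerate_order vs E d \<longleftrightarrow>
     (\<forall>i < length vs. card {j. j < i \<and> {vs ! i, vs ! j} \<in> E} \<le> d)"

text \<open>Position of the earlier endpoint of an edge, and that endpoint itself
  (the vertex at which the edge is a front-edge).\<close>
definition pos :: "'a list \<Rightarrow> 'a \<Rightarrow> nat" where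
  "pos vs v = (LEAST i. i < length vs \<and> vs ! i = v)"

definition low_idx :: "'a list \<Rightarrow> 'a set \<Rightarrow> nat" where
  "low_idx vs e = Min (pos vs ` e)"

definition low_v :: "'a list \<Rightarrow> 'a set \<Rightarrow> 'a" where
  "low_v vs e = vs ! low_idx vs e"

definition processing_order :: "'a list \<Rightarrow> ('a set \<Rightarrow> 'b::linorder) \<Rightarrow> 'a set set \<Rightarrow> 'a set list \<Rightarrow> bool" where
  "processing_order vs t E es \<longleftrightarrow> distinct es \<and> set es = E \<and>
     (\<forall>p q. p < q \<and> q < length es \<longrightarrow>
        low_idx vs (es ! p) < low_idx vs (es ! q) \<or>
        (low_idx vs (es ! p) = low_idx vs (es ! q) \<and> t (es ! p) < t (es ! q)))"

text \<open>The index j' chosen when processing edge e in state S (S j = E_j).\<close>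
definition choice :: "'a list \<Rightarrow> 'a set set \<Rightarrow> nat \<Rightarrow> nat \<Rightarrow> (nat \<Rightarrow> 'a set set) \<Rightarrow> 'a set \<Rightarrow> nat" where
  "choice vs E d a S e =
     (LEAST j. 1 \<le> j \<and> j \<le> a \<and> card (S j \<inter> inc E (low_v vs e)) \<le> 2 * d - 1)"

definition step :: "'a list \<Rightarrow> 'a set set \<Rightarrow> nat \<Rightarrow> nat \<Rightarrow> (nat \<Rightarrow> 'a set set) \<Rightarrow> 'a set \<Rightarrow> (nat \<Rightarrow> 'a set set)" where
  "step vs E d a S e = (let j' = choice vs E d a S e in S(j' := insert e (S j')))"

definition state :: "'a list \<Rightarrow> 'a set set \<Rightarrow> nat \<Rightarrow> nat \<Rightarrow> 'a set list \<Rightarrow> nat \<Rightarrow> (nat \<Rightarrow> 'a set set)" where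
  "state vs E d a es k = foldl (step vs E d a) (\<lambda>_. {}) (take k es)"

definition Jset :: "'a list \<Rightarrow> 'a set set \<Rightarrow> ('a set \<Rightarrow> 'b::linorder) \<Rightarrow> nat \<Rightarrow> nat \<Rightarrow> (nat \<Rightarrow> 'a set set) \<Rightarrow> 'a set \<Rightarrow> nat set" where
  "Jset vs E t d a S e = {j. 1 \<le> j \<and> j \<le> a \<and> card (S j \<inter> Prev E t e (low_v vs e)) \<le> 2 * d - 1}"

end

theory Submission imports Defs begin

text \<open>
  The invariant is that the classes processed so far split the processed edges and have maximum
  degree at most \<open>2d\<close>. When the front-edge \<open>e = {v, w}\<close> is processed, the classes split the
  other edges at \<open>v\<close>, fewer than \<open>2da\<close> of them, so by pigeonhole some class has at most \<open>2d - 1\<close>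
  edges at \<open>v\<close>. Every processed edge at the later endpoint \<open>w\<close> is a back-edge at \<open>w\<close>, and there are
  at most \<open>d\<close> of those, so \<open>w\<close> stays within degree \<open>d + 1 \<le> 2d\<close>. Finally, a class \<open>j < j'\<close> in
  \<open>J(e)\<close> has at least \<open>2d\<close> edges at \<open>v\<close> but fewer than \<open>2d\<close> arriving before \<open>e\<close>; an edge arriving
  after \<open>e\<close> that was processed earlier must be a back-edge at \<open>v\<close>, and by disjointness of the
  classes this gives an injection of these classes into the at most \<open>d\<close> back-edges at \<open>v\<close>.
\<close>

lemma exists_small_of_disjoint_family:
  assumes "finite I" and "\<forall>i\<in>I. finite (A i)"
    and "\<forall>i\<in>I. \<forall>j\<in>I. i \<noteq> j \<longrightarrow> A i \<inter> A j = {}"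
    and "card (\<Union>i\<in>I. A i) < c * card I"
  shows "\<exists>i\<in>I. card (A i) < c"
proof (rule ccontr)
  assume "\<not> ?thesis"
  then have "c \<le> card (A i)" if "i \<in> I" for i
    using that by (simp add: not_less)
  then have "card I * c \<le> (\<Sum>i\<in>I. card (A i))"
    using sum_bounded_below[of I c "\<lambda>i. card (A i)"] by simp
  also have "\<dots> = card (\<Union>i\<in>I. A i)"
    using card_UN_disjoint[OF assms(1-3)] by simp
  finally show False
    using assms(4) by (simp add: mult.commute)
qed

lemma card_le_card_if_disjoint_hits:
  assumes "finite B" and "\<forall>i\<in>I. A i \<inter> B \<noteq> {}"
    and "\<forall>i\<in>I. \<forall>j\<in>I. i \<noteq> j \<longrightarrow> A i \<inter> A j = {}"
  shows "card I \<le> card B"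
proof -
  define g where "g i = (SOME x. x \<in> A i \<inter> B)" for i
  have g: "g i \<in> A i \<inter> B" if "i \<in> I" for i
    unfolding g_def some_in_eq using assms(2) that by blast
  have "inj_on g I"
  proof (rule inj_onI)
    fix i j assume "i \<in> I" "j \<in> I" "g i = g j"
    then have "A i \<inter> A j \<noteq> {}"
      using g by (metis IntD1 disjoint_iff)
    then show "i = j"
      using assms(3) \<open>i \<in> I\<close> \<open>j \<in> I\<close> by blast
  qed
  then show ?thesis
    using g assms(1) by (intro card_inj_on_le) auto
qed

lemma degree_le_max_degree: "finite V \<Longrightarrow> v \<in> V \<Longrightarrow> degree E v \<le> max_degree V E"
  unfolding max_degree_def by simp

definition back_edges :: "'a list \<Rightarrow> 'a set set \<Rightarrow> 'a \<Rightarrow> 'a set set" where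
  "back_edges vs E w = {f \<in> inc E w. low_idx vs f < pos vs w}"

definition degree_bounded_split ::
    "'a set \<Rightarrow> nat \<Rightarrow> nat \<Rightarrow> 'a set set \<Rightarrow> (nat \<Rightarrow> 'a set set) \<Rightarrow> bool" where
  "degree_bounded_split V a D T S \<longleftrightarrow>
     (\<forall>j. S j \<noteq> {} \<longrightarrow> j \<in> {1..a}) \<and> (\<Union>j\<in>{1..a}. S j) = T
     \<and> (\<forall>i j. i \<noteq> j \<longrightarrow> S i \<inter> S j = {}) \<and> (\<forall>j. \<forall>u\<in>V. degree (S j) u \<le> D)"

lemma degree_bounded_split_empty: "degree_bounded_split V a D {} (\<lambda>_. {})"
  unfolding degree_bounded_split_def degree_def inc_def by simp

lemma degree_bounded_split_subset:
  "degree_bounded_split V a D T S \<Longrightarrow> S j \<subseteq> T"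
  unfolding degree_bounded_split_def by (cases "j \<in> {1..a}") auto

lemma degree_bounded_split_insert:
  assumes split: "degree_bounded_split V a D T S" and "e \<notin> T" and "j \<in> {1..a}"
    and "\<forall>u\<in>V. degree (insert e (S j)) u \<le> D"
  shows "degree_bounded_split V a D (insert e T) (S(j := insert e (S j)))"
  unfolding degree_bounded_split_def
proof (intro conjI allI impI)
  let ?S' = "S(j := insert e (S j))"
  have e_notin: "e \<notin> S i" for i
    using degree_bounded_split_subset[OF split] assms(2) by blast
  show "(\<Union>i\<in>{1..a}. ?S' i) = insert e T"
    using split assms(3) unfolding degree_bounded_split_def by (auto split: if_splits)
  show "?S' i \<inter> ?S' i' = {}" if "i \<noteq> i'" for i i'
  proof -
    have "S i \<inter> S i' = {}"
      using split that unfolding degree_bounded_split_def by blast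
    then show ?thesis
      using that e_notin by (cases "i = j"; cases "i' = j") auto
  qed
  show "i \<in> {1..a}" if "?S' i \<noteq> {}" for i
    using that split assms(3) unfolding degree_bounded_split_def by (cases "i = j") auto
qed (use split assms in \<open>auto simp: degree_bounded_split_def\<close>)

locale ordered_degenerate_graph =
  fixes V :: "'a set" and E :: "'a set set" and vs :: "'a list" and d :: nat
  assumes simple: "simple_graph V E"
    and set_vs: "set vs = V"
    and degenerate: "degenerate_order vs E d"
begin

lemma finite_V: "finite V"
  using simple by (simp add: simple_graph_def)

lemma edge_cases: "e \<in> E \<Longrightarrow> \<exists>x y. e = {x, y} \<and> x \<noteq> y \<and> x \<in> V \<and> y \<in> V"
  using simple unfolding simple_graph_def by blast

lemma finite_E: "finite E"
proof -
  have "E \<subseteq> Pow V"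
    using edge_cases by blast
  then show ?thesis
    using finite_V finite_subset by blast
qed

lemma finite_inc: "finite (inc E x)"
  unfolding inc_def using finite_E by simp

lemma pos_in_range: "x \<in> V \<Longrightarrow> pos vs x < length vs \<and> vs ! pos vs x = x"
proof -
  assume "x \<in> V"
  then have "\<exists>i. i < length vs \<and> vs ! i = x"
    using set_vs by (metis in_set_conv_nth)
  then show ?thesis
    unfolding pos_def by (rule LeastI_ex)
qed

lemma low_of_pair:
  assumes "x \<in> V" and "pos vs x < pos vs y"
  shows "low_idx vs {x, y} = pos vs x" and "low_v vs {x, y} = x"
proof -
  show "low_idx vs {x, y} = pos vs x"
    unfolding low_idx_def using assms(2) by simp
  then show "low_v vs {x, y} = x"
    unfolding low_v_def using pos_in_range assms(1) by simp
qed

lemma edge_as_front_edge: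
  assumes "e \<in> E"
  obtains x w where "e = {x, w}" "x \<in> V" "w \<in> V"
    "low_v vs e = x" "low_idx vs e = pos vs x" "pos vs x < pos vs w"
proof -
  obtain x y where e: "e = {x, y}" "x \<noteq> y" "x \<in> V" "y \<in> V"
    using edge_cases assms by blast
  have "pos vs x \<noteq> pos vs y"
    using pos_in_range e by metis
  then consider "pos vs x < pos vs y" | "pos vs y < pos vs x"
    by linarith
  then show thesis
  proof cases
    case 1
    then show thesis
      using that[of x y] low_of_pair[OF e(3) 1] e by simp
  next
    case 2
    then show thesis
      using that[of y x] low_of_pair[OF e(4) 2] e by (simp add: insert_commute)
  qed
qed

lemma card_back_edges_le: "w \<in> V \<Longrightarrow> card (back_edges vs E w) \<le> d"
proof -
  assume "w \<in> V"
  define i where "i = pos vs w"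
  have i: "i < length vs" "vs ! i = w"
    using pos_in_range \<open>w \<in> V\<close> unfolding i_def by auto
  let ?J = "{j. j < i \<and> {vs ! i, vs ! j} \<in> E}"
  have "back_edges vs E w \<subseteq> (\<lambda>j. {vs ! i, vs ! j}) ` ?J"
  proof
    fix f assume "f \<in> back_edges vs E w"
    then have f: "f \<in> E" "w \<in> f" "low_idx vs f < i"
      unfolding back_edges_def inc_def i_def by auto
    obtain x u where u: "f = {x, u}" "x \<in> V" "low_v vs f = x" "low_idx vs f = pos vs x"
      by (rule edge_as_front_edge[OF f(1)])
    have "x = vs ! low_idx vs f"
      using pos_in_range[OF u(2)] u(4) by simp
    moreover have "x \<noteq> w"
      using u(4) f(3) i_def by auto
    then have "u = w"
      using f(2) u(1) by auto
    ultimately have "f = {vs ! i, vs ! low_idx vs f}"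
      using u(1) i by (simp add: insert_commute)
    with f show "f \<in> (\<lambda>j. {vs ! i, vs ! j}) ` ?J"
      by auto
  qed
  then have "card (back_edges vs E w) \<le> card ((\<lambda>j. {vs ! i, vs ! j}) ` ?J)"
    by (intro card_mono) auto
  also have "\<dots> \<le> card ?J"
    by (rule card_image_le) auto
  also have "\<dots> \<le> d"
    using degenerate i unfolding degenerate_order_def by auto
  finally show ?thesis .
qed

end

locale edge_splitting_process = ordered_degenerate_graph V E vs d for V E vs d +
  fixes t :: "'a set \<Rightarrow> 'b::linorder" and a :: nat and es :: "'a set list"
  assumes d_pos: "1 \<le> d"
    and max_degree_eq: "max_degree V E = 2 * d * a"
    and t_inj: "inj_on t E"
    and processing: "processing_order vs t E es"
begin

lemma distinct_es: "distinct es" and set_es: "set es = E"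
  using processing unfolding processing_order_def by auto

lemma processed_before:
  "p < k \<Longrightarrow> k < length es \<Longrightarrow> low_idx vs (es ! p) < low_idx vs (es ! k) \<or>
     (low_idx vs (es ! p) = low_idx vs (es ! k) \<and> t (es ! p) < t (es ! k))"
  using processing unfolding processing_order_def by blast

lemma state_Suc:
  "k < length es \<Longrightarrow> state vs E d a es (Suc k) = step vs E d a (state vs E d a es k) (es ! k)"
  unfolding state_def by (simp add: take_Suc_conv_app_nth)

end

locale process_step = edge_splitting_process V E vs d t a es for V E vs d t a es +
  fixes k :: nat
  assumes k_less: "k < length es"
    and split_before: "degree_bounded_split V a (2 * d) (set (take k es)) (state vs E d a es k)"
begin

abbreviation "S \<equiv> state vs E d a es k"
abbreviation "e \<equiv> es ! k"
abbreviation "v \<equiv> low_v vs e"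
abbreviation "j' \<equiv> choice vs E d a S e"

lemma e_in_E: "e \<in> E"
  using k_less set_es by auto

lemma e_not_processed: "e \<notin> set (take k es)"
  using distinct_es k_less by (auto simp: in_set_conv_nth nth_eq_iff_index_eq)

lemma processed_order:
  assumes "f \<in> set (take k es)"
  shows "low_idx vs f < low_idx vs e \<or> (low_idx vs f = low_idx vs e \<and> t f < t e)"
proof -
  obtain p where "p < k" "es ! p = f"
    using assms by (auto simp: in_set_conv_nth)
  then show ?thesis
    using processed_before[OF \<open>p < k\<close> k_less] by simp
qed

lemma class_subset_E: "S j \<subseteq> E"
  using degree_bounded_split_subset[OF split_before, of j] set_take_subset[of k es] set_es
  by blast

lemma classes_disjoint: "i \<noteq> j \<Longrightarrow> S i \<inter> S j = {}"
  using split_before unfolding degree_bounded_split_def by blast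

lemma front_vertex: "v \<in> e" "v \<in> V" "low_idx vs e = pos vs v"
  using edge_as_front_edge[OF e_in_E] by (metis insertI1)+

lemma current_edge_ends:
  obtains w where "e = {v, w}" "w \<in> V" "pos vs v < pos vs w"
  using edge_as_front_edge[OF e_in_E] by metis

lemma free_class_exists: "\<exists>j. 1 \<le> j \<and> j \<le> a \<and> card (S j \<inter> inc E v) \<le> 2 * d - 1"
proof -
  have "(\<Union>j\<in>{1..a}. S j \<inter> inc E v) \<subseteq> inc E v - {e}"
    using degree_bounded_split_subset[OF split_before] e_not_processed by blast
  then have "card (\<Union>j\<in>{1..a}. S j \<inter> inc E v) \<le> card (inc E v - {e})"
    using finite_inc by (intro card_mono) auto
  also have "\<dots> < card (inc E v)"
    using e_in_E front_vertex(1) by (intro card_Diff1_less finite_inc) (simp add: inc_def)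
  also have "\<dots> \<le> 2 * d * card {1..a}"
    using degree_le_max_degree[OF finite_V front_vertex(2), of E] max_degree_eq by (simp add: degree_def)
  finally obtain j where "j \<in> {1..a}" "card (S j \<inter> inc E v) < 2 * d"
    using exists_small_of_disjoint_family[of "{1..a}" "\<lambda>j. S j \<inter> inc E v" "2 * d"]
      classes_disjoint finite_inc by blast
  then show ?thesis
    by auto
qed

lemma choice_is_free_class: "1 \<le> j' \<and> j' \<le> a \<and> card (S j' \<inter> inc E v) \<le> 2 * d - 1"
  unfolding choice_def using free_class_exists by (rule LeastI_ex)

lemma choice_least: "j < j' \<Longrightarrow> 1 \<le> j \<Longrightarrow> j \<le> a \<Longrightarrow> 2 * d - 1 < card (S j \<inter> inc E v)"
  unfolding choice_def using not_less_Least by fastforce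

lemma processed_edge_at_later_vertex:
  assumes "f \<in> S j" and "x \<in> f" and "low_idx vs e < pos vs x"
  shows "f \<in> back_edges vs E x"
proof -
  have "f \<in> set (take k es)"
    using assms(1) degree_bounded_split_subset[OF split_before] by blast
  then have "low_idx vs f < pos vs x"
    using processed_order assms(3) by fastforce
  then show ?thesis
    using assms(1,2) class_subset_E unfolding back_edges_def inc_def by blast
qed

lemma processed_edge_arriving_later:
  assumes "f \<in> S j \<inter> inc E v" and "\<not> t f < t e"
  shows "f \<in> back_edges vs E v"
proof -
  have "f \<in> set (take k es)" "f \<in> E"
    using assms(1) degree_bounded_split_subset[OF split_before] class_subset_E by blast+
  then have "t f \<noteq> t e"
    using e_not_processed e_in_E t_inj by (metis inj_on_contraD)
  then have "low_idx vs f < pos vs v"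
    using processed_order[OF \<open>f \<in> set (take k es)\<close>] assms(2) front_vertex(3)
    by auto
  then show ?thesis
    using assms(1) unfolding back_edges_def by blast
qed

lemma degree_insert_choice:
  assumes "u \<in> V"
  shows "degree (insert e (S j')) u \<le> 2 * d"
proof -
  obtain w where ends: "e = {v, w}" "w \<in> V" "pos vs v < pos vs w"
    by (rule current_edge_ends)
  consider "u = v" | "u = w" | "u \<notin> e"
    using ends(1) by blast
  then show ?thesis
  proof cases
    case 1
    have "inc (insert e (S j')) u = insert e (S j' \<inter> inc E v)"
      using 1 class_subset_E front_vertex(1) unfolding inc_def by blast
    then show ?thesis
      unfolding degree_def using choice_is_free_class d_pos by (simp add: card_insert_le_m1)
  next
    case 2
    have "inc (insert e (S j')) u \<subseteq> insert e (back_edges vs E w)"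
      using 2 processed_edge_at_later_vertex front_vertex(3) ends(3) unfolding inc_def by auto
    then have "degree (insert e (S j')) u \<le> card (insert e (back_edges vs E w))"
      unfolding degree_def using finite_inc[of w]
      by (intro card_mono) (auto simp: back_edges_def intro: finite_subset)
    also have "\<dots> \<le> Suc d"
      using card_back_edges_le[OF ends(2)] by (simp add: card_insert_le_m1)
    finally show ?thesis
      using d_pos by linarith
  next
    case 3
    then have "inc (insert e (S j')) u = inc (S j') u"
      unfolding inc_def by blast
    then show ?thesis
      using split_before assms unfolding degree_bounded_split_def degree_def by metis
  qed
qed

lemma choice_in_Jset: "j' \<in> Jset vs E t d a S e"
proof -
  have "card (S j' \<inter> Prev E t e v) \<le> card (S j' \<inter> inc E v)"
    using finite_inc[of v] by (intro card_mono) (auto simp: Prev_def)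
  then show ?thesis
    using choice_is_free_class unfolding Jset_def by auto
qed

lemma class_below_choice_has_back_edge:
  assumes "j \<in> Jset vs E t d a S e" and "j < j'"
  shows "S j \<inter> back_edges vs E v \<noteq> {}"
proof -
  have less: "card (S j \<inter> Prev E t e v) < card (S j \<inter> inc E v)"
    using assms choice_least unfolding Jset_def by fastforce
  have "\<not> S j \<inter> inc E v \<subseteq> S j \<inter> Prev E t e v"
  proof
    assume sub: "S j \<inter> inc E v \<subseteq> S j \<inter> Prev E t e v"
    have "finite (S j \<inter> Prev E t e v)"
      using finite_inc[of v] by (rule finite_subset[rotated]) (auto simp: Prev_def)
    from card_mono[OF this sub] less show False
      by simp
  qed
  then obtain f where "f \<in> S j \<inter> inc E v" "\<not> t f < t e"
    unfolding Prev_def by blast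
  then show ?thesis
    using processed_edge_arriving_later by blast
qed

lemma card_Jset_below_choice: "card {j \<in> Jset vs E t d a S e. j < j'} \<le> d"
proof -
  have "finite (back_edges vs E v)"
    using finite_inc[of v] unfolding back_edges_def by simp
  then have "card {j \<in> Jset vs E t d a S e. j < j'} \<le> card (back_edges vs E v)"
    using class_below_choice_has_back_edge classes_disjoint
    by (intro card_le_card_if_disjoint_hits) auto
  also have "\<dots> \<le> d"
    using card_back_edges_le[OF front_vertex(2)] .
  finally show ?thesis .
qed

lemma split_after: "degree_bounded_split V a (2 * d) (set (take (Suc k) es)) (state vs E d a es (Suc k))"
proof -
  have "set (take (Suc k) es) = insert e (set (take k es))"
    using k_less by (simp add: take_Suc_conv_app_nth)
  moreover have "state vs E d a es (Suc k) = S(j' := insert e (S j'))"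
    using state_Suc[OF k_less] unfolding step_def Let_def by simp
  ultimately show ?thesis
    using degree_bounded_split_insert[OF split_before e_not_processed] choice_is_free_class
      degree_insert_choice by auto
qed

end

context edge_splitting_process
begin

lemma split_state: "k \<le> length es \<Longrightarrow> degree_bounded_split V a (2 * d) (set (take k es)) (state vs E d a es k)"
proof (induction k)
  case 0
  then show ?case
    unfolding state_def using degree_bounded_split_empty by simp
next
  case (Suc k)
  then interpret process_step V E vs d t a es k
    by unfold_locales auto
  show ?case
    by (rule split_after)
qed

lemma process_stepI: "k < length es \<Longrightarrow> process_step V E vs d t a es k"
  using split_state by unfold_locales auto

end

theorem lemma1:
  fixes V :: "'a set" and E :: "'a set set" and vs :: "'a list"
    and t :: "'a set \<Rightarrow> 'b::linorder" and d a :: nat and es :: "'a set list"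
  assumes "d \<ge> 1" and "a \<ge> 1"
    and "simple_graph V E"
    and "max_degree V E = 2 * d * a"
    and "inj_on t E"
    and "distinct vs" and "set vs = V"
    and "degenerate_order vs E d"
    and "processing_order vs t E es"
  shows
    "(\<forall>k < length es.
        let S = state vs E d a es k; e = es ! k; v = low_v vs e; j' = choice vs E d a S e in
          (\<exists>j. 1 \<le> j \<and> j \<le> a \<and> card (S j \<inter> inc E v) \<le> 2 * d - 1)
          \<and> 1 \<le> j' \<and> j' \<le> a
          \<and> (\<forall>u \<in> V. degree (insert e (S j')) u \<le> 2 * d)
          \<and> j' \<in> Jset vs E t d a S e
          \<and> card {j \<in> Jset vs E t d a S e. j < j'} \<le> d)
     \<and> (let S = state vs E d a es (length es) in
          (\<Union>j \<in> {1..a}. S j) = E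
          \<and> (\<forall>i \<in> {1..a}. \<forall>j \<in> {1..a}. i \<noteq> j \<longrightarrow> S i \<inter> S j = {})
          \<and> (\<forall>j \<in> {1..a}. \<forall>u \<in> V. degree (S j) u \<le> 2 * d))"
proof -
  interpret edge_splitting_process V E vs d t a es
    using assms by unfold_locales auto
  have step: "process_step V E vs d t a es k" if "k < length es" for k
    using that by (rule process_stepI)
  have "degree_bounded_split V a (2 * d) E (state vs E d a es (length es))"
    using split_state[of "length es"] set_es by simp
  then show ?thesis
    using process_step.free_class_exists[OF step] process_step.choice_is_free_class[OF step]
      process_step.degree_insert_choice[OF step] process_step.choice_in_Jset[OF step]
      process_step.card_Jset_below_choice[OF step]
    unfolding Let_def degree_bounded_split_def by auto
qed

end
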